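(* Let $\Lambda\subset\mathbb Z$ be a finite interval which is the union of three consecutive intervals $\Lambda_l,\Lambda_m,\Lambda_r$ (in this order), and put $\Lambda_1=\Lambda_l\cup\Lambda_m$, $\Lambda_2=\Lambda_m\cup\Lambda_r$. Let $\mathbf D_1\in\mathcal D_{\Lambda_1}$ and $\mathbf D_2\in\mathcal D_{\Lambda_2}$ be VMD tilings. Assume $|\Lambda_m|\ge6$ and that $\boldsymbol\sigma_{\Lambda_1}(\mathbf D_1)$ and $\boldsymbol\sigma_{\Lambda_2}(\mathbf D_2)$ agree on $\Lambda_m$. Then there is a unique VMD tiling $\mathbf D\in\mathcal D_\Lambda$ whose configuration $\boldsymbol\sigma_\Lambda(\mathbf D)$ restricted to $\Lambda_1$ equals $\boldsymbol\sigma_{\Lambda_1}(\mathbf D_1)$ and restricted to $\Lambda_2$ equals $\boldsymbol\sigma_{\Lambda_2}(\mathbf D_2)$.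
   Context: Tilings of a finite interval $\Lambda$: a tile occupies consecutive sites and carries a 0/1 word (its particle content): void $0$; monomer $100$; dimer $011000$; left boundary dimer $11000$ (allowed only as the first tile of $\Lambda$); and, allowed only as the last tile of $\Lambda$: right dimer $011$, right 1-monomer $1$, right 2-monomer $10$, truncated 1-dimer $0110$, truncated 2-dimer $01100$. A root tiling $R$ of $\Lambda$ is a tiling of $\Lambda$ by consecutive tiles consisting of voids and monomers, optionally with a left boundary dimer as first tile and optionally with one of right dimer, right 1-monomer, right 2-monomer as last tile; $\mathcal R_\Lambda$ denotes their set. A VMD tiling derived from $R$ is obtained by choosing a collection of disjoint pairs of consecutive tiles of $R$, each pair being either two monomers (replaced by a dimer) or a monomer followed by a right $j$-monomer, $j\in\{1,2\}$ (replaced by the truncated $j$-dimer); $\mathcal D_\Lambda(R)$ is the set of these and $\mathcal D_\Lambda=\bigcup_{R\in\mathcal R_\Lambda}\mathcal D_\Lambda(R)$. The configuration $\boldsymbol\sigma_\Lambda(\mathbf D)\in\{0,1\}^\Lambda$ of a tiling $\mathbf D$ is the concatenation of the particle contents of its tiles. *)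

theory Defs
  imports Main
begin

text \<open>Tiles. A tile occupies consecutive sites; its particle content is a 0/1 word
  (here: a list of booleans, True = 1).\<close>

datatype tile =
    Void
  | Mono
  | Dimer
  | LDimer
  | RDimer
  | RMono1
  | RMono2
  | TDimer1
  | TDimer2

fun word :: "tile \<Rightarrow> bool list" where
  "word Void = [False]"
| "word Mono = [True, False, False]"
| "word Dimer = [False, True, True, False, False, False]"
| "word LDimer = [True, True, False, False, False]"
| "word RDimer = [False, True, True]"
| "word RMono1 = [True]"
| "word RMono2 = [True, False]"
| "word TDimer1 = [False, True, True, False]"
| "word TDimer2 = [False, True, True, False, False]"

text \<open>Concatenated particle content of a tiling (a tiling is the list of its tiles, left to right).\<close>
definition content :: "tile list \<Rightarrow> bool list" where
  "content D = concat (map word D)"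

definition root_shape :: "tile list \<Rightarrow> bool" where
  "root_shape R \<longleftrightarrow>
     (\<exists>pre mid suf.
        R = pre @ mid @ suf \<and> (pre = [] \<or> pre = [LDimer]) \<and>
        set mid \<subseteq> {Void, Mono} \<and>
        (suf = [] \<or> suf = [RDimer] \<or> suf = [RMono1] \<or> suf = [RMono2]))"

definition root_tilings :: "int \<Rightarrow> int \<Rightarrow> tile list set" where
  "root_tilings x y = {R. root_shape R \<and> int (length (content R)) = y - x}"

inductive derived :: "tile list \<Rightarrow> tile list \<Rightarrow> bool" where
  derived_Nil: "derived [] []"
| derived_keep: "derived R D \<Longrightarrow> derived (t # R) (t # D)"
| derived_dimer: "derived R D \<Longrightarrow> derived (Mono # Mono # R) (Dimer # D)"
| derived_trunc1: "derived R D \<Longrightarrow> derived (Mono # RMono1 # R) (TDimer1 # D)"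
| derived_trunc2: "derived R D \<Longrightarrow> derived (Mono # RMono2 # R) (TDimer2 # D)"

text \<open>The set \<D>_\<Lambda> of VMD tilings of the interval \<Lambda> = {x..<y}.\<close>
definition VMD_tilings :: "int \<Rightarrow> int \<Rightarrow> tile list set" where
  "VMD_tilings x y = {D. \<exists>R \<in> root_tilings x y. derived R D}"

text \<open>Configuration \<sigma>_\<Lambda>(D) of a tiling D of an interval starting at site x:
  value at site i (meaningful for i in the interval).\<close>
definition sigma :: "int \<Rightarrow> tile list \<Rightarrow> int \<Rightarrow> bool" where
  "sigma x D i = content D ! nat (i - x)"

end

theory Submission
  imports Defs
begin

text \<open>
  A configuration determines its VMD tiling: a tiling without left boundary dimer never starts
  with 11, so its first tile can be read off the first sites, while a left boundary dimer is
  recognised by its leading 11. This gives uniqueness.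

  For existence, cut \<open>D\<^sub>1\<close> at the first tile boundary at or after \<open>b\<close>. Right of \<open>b\<close>, the
  tile of \<open>D\<^sub>1\<close> straddling \<open>b\<close> leaves one of 0, 00, 000, 1000, 11000, followed by further
  tiles of \<open>D\<^sub>1\<close>. Reading \<open>D\<^sub>2\<close> from \<open>b\<close>, this short word forces a tile boundary of
  \<open>D\<^sub>2\<close> at the same site: its zeros must be voids, because the next two sites, which lie in
  \<open>\<Lambda>\<^sub>m\<close> since \<open>|\<Lambda>\<^sub>m| \<ge> 6\<close>, cannot carry 11. The left part of \<open>D\<^sub>1\<close> followed by the
  right part of \<open>D\<^sub>2\<close> is the tiling sought.
\<close>

fun body_tiling :: "tile list \<Rightarrow> bool" where
  "body_tiling [] \<longleftrightarrow> True"
| "body_tiling (t # D) \<longleftrightarrow>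
     t \<in> {Void, Mono, Dimer} \<and> body_tiling D \<or>
     t \<in> {RDimer, RMono1, RMono2, TDimer1, TDimer2} \<and> D = []"

definition vmd_tiling :: "tile list \<Rightarrow> bool" where
  "vmd_tiling D \<longleftrightarrow> body_tiling D \<or> (\<exists>D'. D = LDimer # D' \<and> body_tiling D')"

lemma content_simps [simp]:
  "content [] = []"
  "content (t # D) = word t @ content D"
  "content (A @ B) = content A @ content B"
  by (simp_all add: content_def)

lemma word_nonempty [simp]: "word t \<noteq> []"
  by (cases t) simp_all

lemma length_word_le: "length (word t) \<le> 6"
  by (cases t) simp_all

lemma body_tiling_append:
  "set A \<subseteq> {Void, Mono, Dimer} \<Longrightarrow> body_tiling B \<Longrightarrow> body_tiling (A @ B)"
  by (induction A) auto

lemma body_tiling_append_nonempty: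
  "body_tiling (A @ B) \<Longrightarrow> B \<noteq> [] \<Longrightarrow> set A \<subseteq> {Void, Mono, Dimer} \<and> body_tiling B"
  by (induction A) auto

lemma vmd_tiling_append_nonempty:
  assumes "vmd_tiling (A @ B)" "B \<noteq> []"
  shows "set A \<subseteq> {Void, Mono, Dimer, LDimer}"
    and "A \<noteq> [] \<Longrightarrow> body_tiling B"
    and "body_tiling E \<Longrightarrow> vmd_tiling (A @ E)"
proof -
  obtain pre A' where A: "A = pre @ A'" "pre = [] \<or> pre = [LDimer]" "set A' \<subseteq> {Void, Mono, Dimer}"
    and body: "A \<noteq> [] \<Longrightarrow> body_tiling B"
  proof -
    consider "A = []" | "body_tiling (A @ B)" | A' where "A = LDimer # A'" "body_tiling (A' @ B)"
      using assms(1) unfolding vmd_tiling_def by (metis append_eq_Cons_conv)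
    then show thesis
    proof cases
      case 1
      then show thesis using that[of "[]" "[]"] by simp
    next
      case 2
      then show thesis using that[of "[]" A] body_tiling_append_nonempty assms(2) by auto
    next
      case 3
      then show thesis using that[of "[LDimer]" A'] body_tiling_append_nonempty assms(2) by auto
    qed
  qed
  show "set A \<subseteq> {Void, Mono, Dimer, LDimer}" using A by auto
  show "A \<noteq> [] \<Longrightarrow> body_tiling B" by (rule body)
  show "body_tiling E \<Longrightarrow> vmd_tiling (A @ E)"
    using A body_tiling_append[OF A(3)] unfolding vmd_tiling_def by auto
qed

lemma root_shape_iff: "root_shape R \<longleftrightarrow> vmd_tiling R \<and> set R \<inter> {Dimer, TDimer1, TDimer2} = {}"
proof
  assume "root_shape R"
  then obtain pre mid suf where R: "R = pre @ mid @ suf" "pre = [] \<or> pre = [LDimer]"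
    "set mid \<subseteq> {Void, Mono}" "suf = [] \<or> suf = [RDimer] \<or> suf = [RMono1] \<or> suf = [RMono2]"
    unfolding root_shape_def by blast
  have "body_tiling (mid @ suf)"
    using R(3,4) by (intro body_tiling_append) auto
  then show "vmd_tiling R \<and> set R \<inter> {Dimer, TDimer1, TDimer2} = {}"
    using R unfolding vmd_tiling_def by auto
next
  have body_split: "\<exists>mid suf. R = mid @ suf \<and> set mid \<subseteq> {Void, Mono} \<and>
      (suf = [] \<or> suf = [RDimer] \<or> suf = [RMono1] \<or> suf = [RMono2])"
    if "body_tiling R" "set R \<inter> {Dimer, TDimer1, TDimer2} = {}" for R
    using that
  proof (induction R)
    case (Cons t R)
    then show ?case
    proof (cases "t \<in> {Void, Mono}")
      case True
      then obtain mid suf where "R = mid @ suf" "set mid \<subseteq> {Void, Mono}"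
          "suf = [] \<or> suf = [RDimer] \<or> suf = [RMono1] \<or> suf = [RMono2]"
        using Cons by auto
      then show ?thesis using True by (intro exI[of _ "t # mid"] exI[of _ suf]) auto
    next
      case False
      then show ?thesis using Cons.prems by (intro exI[of _ "[]"] exI[of _ "[t]"]) auto
    qed
  qed auto
  assume "vmd_tiling R \<and> set R \<inter> {Dimer, TDimer1, TDimer2} = {}"
  then consider "body_tiling R" "set R \<inter> {Dimer, TDimer1, TDimer2} = {}"
    | R' where "R = [LDimer] @ R'" "body_tiling R'" "set R' \<inter> {Dimer, TDimer1, TDimer2} = {}"
    unfolding vmd_tiling_def by auto
  then show "root_shape R"
  proof cases
    case 1
    then show ?thesis unfolding root_shape_def using body_split by (metis append_Nil)
  next
    case 2
    then show ?thesis unfolding root_shape_def using body_split by metis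
  qed
qed

lemma length_content_derived: "derived R D \<Longrightarrow> length (content D) = length (content R)"
  by (induction rule: derived.induct) simp_all

lemma derived_body_tiling: "derived R D \<Longrightarrow> body_tiling R \<Longrightarrow> body_tiling D"
  by (induction rule: derived.induct) (auto elim: derived.cases)

lemma derived_vmd_tiling: "derived R D \<Longrightarrow> vmd_tiling R \<Longrightarrow> vmd_tiling D"
  unfolding vmd_tiling_def by (auto elim: derived.cases intro: derived_body_tiling)

fun root_tiles :: "tile \<Rightarrow> tile list" where
  "root_tiles Dimer = [Mono, Mono]"
| "root_tiles TDimer1 = [Mono, RMono1]"
| "root_tiles TDimer2 = [Mono, RMono2]"
| "root_tiles t = [t]"

definition root_of :: "tile list \<Rightarrow> tile list" where
  "root_of D = concat (map root_tiles D)"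

lemma root_of_simps [simp]:
  "root_of [] = []"
  "root_of (t # D) = root_tiles t @ root_of D"
  by (simp_all add: root_of_def)

lemma derived_root_of: "derived (root_of D) D"
proof (induction D)
  case (Cons t D)
  then show ?case by (cases t) (auto intro: derived.intros)
qed (simp add: derived_Nil)

lemma length_content_root_of: "length (content (root_of D)) = length (content D)"
proof (induction D)
  case (Cons t D)
  then show ?case by (cases t) auto
qed simp

lemma root_shape_root_of: "vmd_tiling D \<Longrightarrow> root_shape (root_of D)"
proof -
  have body: "body_tiling (root_of D)" if "body_tiling D" for D
    using that
  proof (induction D)
    case (Cons t D)
    then show ?case by (cases t) auto
  qed simp
  have "set (root_of D) \<inter> {Dimer, TDimer1, TDimer2} = {}"
  proof (induction D)
    case (Cons t D)
    then show ?case by (cases t) auto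
  qed simp
  moreover assume "vmd_tiling D"
  then have "vmd_tiling (root_of D)"
    unfolding vmd_tiling_def by (auto intro: body)
  ultimately show ?thesis
    unfolding root_shape_iff by simp
qed

lemma VMD_tilings_eq: "VMD_tilings x y = {D. vmd_tiling D \<and> int (length (content D)) = y - x}"
proof (intro set_eqI iffI)
  fix D
  assume "D \<in> VMD_tilings x y"
  then obtain R where "root_shape R" "int (length (content R)) = y - x" "derived R D"
    unfolding VMD_tilings_def root_tilings_def by blast
  then show "D \<in> {D. vmd_tiling D \<and> int (length (content D)) = y - x}"
    using root_shape_iff derived_vmd_tiling length_content_derived by auto
next
  fix D
  assume "D \<in> {D. vmd_tiling D \<and> int (length (content D)) = y - x}"
  then show "D \<in> VMD_tilings x y"
    unfolding VMD_tilings_def root_tilings_def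
    using derived_root_of[of D] root_shape_root_of[of D] length_content_root_of[of D] by auto
qed

lemma body_tiling_content_not_True_True:
  assumes "body_tiling D"
  shows "content D \<noteq> True # True # w"
proof (cases D)
  case (Cons t D')
  then show ?thesis using assms by (cases t) auto
qed simp

lemma body_tiling_first_tile_eq:
  assumes "body_tiling (t # D)" "body_tiling (t' # D')" "word t @ content D = word t' @ content D'"
  shows "t = t'"
  using assms body_tiling_content_not_True_True[of D]
    body_tiling_content_not_True_True[of D', THEN not_sym]
  by (cases t; cases t') auto

lemma body_tiling_content_inj:
  "body_tiling D \<Longrightarrow> body_tiling D' \<Longrightarrow> content D = content D' \<Longrightarrow> D = D'"
proof (induction D arbitrary: D')
  case Nil
  then show ?case by (cases D') simp_all
next
  case (Cons t D)
  then obtain t' D'' where D': "D' = t' # D''" by (cases D') simp_all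
  with Cons.prems have "t = t'"
    by (intro body_tiling_first_tile_eq[of t D t' D'']) simp_all
  with Cons D' show ?case by auto
qed

lemma vmd_tiling_content_inj: "inj_on content {D. vmd_tiling D}"
proof (rule inj_onI, unfold mem_Collect_eq)
  have LDimer_body: "content (LDimer # D) \<noteq> content D'" if "body_tiling D'" for D D'
    using body_tiling_content_not_True_True[OF that, of "False # False # False # content D"] by auto
  fix D D'
  assume "vmd_tiling D" "vmd_tiling D'" and eq: "content D = content D'"
  then consider "body_tiling D" "body_tiling D'"
    | E E' where "D = LDimer # E" "D' = LDimer # E'" "body_tiling E" "body_tiling E'"
    using LDimer_body eq unfolding vmd_tiling_def by metis
  then show "D = D'"
    using eq by cases (auto intro: body_tiling_content_inj)
qed

definition cut_rests :: "bool list set" where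
  "cut_rests = {[], [False], [False, False], [False, False, False],
                [True, False, False, False], [True, True, False, False, False]}"

lemma drop_word_cut_rests:
  assumes "t \<in> {Void, Mono, Dimer, LDimer}" "0 < k"
  shows "drop k (word t) \<in> cut_rests"
proof -
  have "k \<in> {1, 2, 3, 4, 5} \<or> 6 \<le> k" using assms(2) by auto
  then show ?thesis using assms(1) by (auto simp: cut_rests_def numeral_eq_Suc)
qed

lemma body_tiling_drop_zeros:
  assumes "body_tiling D" "content D = replicate n False @ w" "\<And>w'. w \<noteq> True # True # w'"
  shows "\<exists>E. body_tiling E \<and> content E = w"
  using assms(1,2)
proof (induction n arbitrary: D)
  case 0
  then show ?case by auto
next
  case (Suc n)
  then obtain t D' where D: "D = t # D'" by (cases D) auto
  have "t = Void"
    using Suc.prems assms(3) D by (cases t; cases n) auto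
  then show ?case using Suc D by auto
qed

lemma vmd_tiling_resync:
  assumes "vmd_tiling D" "content D = s @ x @ z" "s \<in> cut_rests"
    and "body_tiling B" "content B = x" "6 \<le> length s + length x"
  shows "\<exists>E. body_tiling E \<and> content E = x @ z"
proof -
  \<comment> \<open>The length bound gives \<open>2 \<le> length x\<close> unless \<open>s\<close> is 11000, the one case not needing it.\<close>
  have no_True_True: "x @ z \<noteq> True # True # w" if "2 \<le> length x" for w
    using body_tiling_content_not_True_True[OF assms(4), of "drop 2 x"] assms(5) that
    by (cases x; cases "tl x") auto
  consider (zeros) n where "s = replicate n False" "n \<le> 3"
    | (mono) "s = [True, False, False, False]"
    | (ldimer) "s = [True, True, False, False, False]"
  proof -
    have "s = replicate (length s) False" if "s \<in> {[], [False], [False, False], [False, False, False]}"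
      using that by auto
    then show thesis using that assms(3) unfolding cut_rests_def by fastforce
  qed
  then show ?thesis
  proof cases
    case zeros
    then have "content D \<noteq> True # True # w" for w
      using no_True_True assms(2,6) by (cases n) auto
    then have "body_tiling D"
      using assms(1) unfolding vmd_tiling_def by fastforce
    then show ?thesis
      using body_tiling_drop_zeros zeros no_True_True assms(2,6) by auto
  next
    case mono
    obtain t D' where D: "D = t # D'" using assms(2) mono by (cases D) auto
    then have "t = Mono" "body_tiling D'"
      using assms(1,2) mono unfolding vmd_tiling_def by (cases t; auto)+
    then show ?thesis
      using body_tiling_drop_zeros[of D' 1 "x @ z"] no_True_True assms(2,6) mono D by auto
  next
    case ldimer
    obtain t D' where D: "D = t # D'" using assms(2) ldimer by (cases D) auto
    then have "t = LDimer" "body_tiling D'"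
      using assms(1,2) ldimer unfolding vmd_tiling_def by (cases t; auto)+
    then show ?thesis
      using assms(2) ldimer D by auto
  qed
qed

lemma vmd_tiling_cut:
  assumes "vmd_tiling D" "content D = u @ v" "u \<noteq> []" "6 \<le> length v"
  shows "\<exists>A B s. D = A @ B \<and> A \<noteq> [] \<and> B \<noteq> [] \<and>
           content A = u @ s \<and> v = s @ content B \<and> s \<in> cut_rests"
proof -
  have "map word D \<noteq> []" using assms(2,3) by auto
  then obtain ws xs xs' ws' where "map word D = ws @ (xs @ xs') # ws'"
    and "u = concat ws @ xs" "v = xs' @ concat ws'"
    using assms(2) concat_eq_append_conv[of "map word D" u v] unfolding content_def by auto
  then obtain A t B where D: "D = A @ t # B" "word t = xs @ xs'"
    and u: "u = content A @ xs" and v: "v = xs' @ content B"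
    unfolding content_def by (auto simp: map_eq_append_conv map_eq_Cons_conv)
  show ?thesis
  proof (cases "xs = []")
    case True
    then show ?thesis
      using D u v assms(3) by (intro exI[of _ A] exI[of _ "t # B"] exI[of _ "[]"]) (auto simp: cut_rests_def)
  next
    case False
    have "length xs' < 6" using length_word_le[of t] D(2) False by (cases xs) auto
    then have "B \<noteq> []" using assms(4) v by auto
    then have "t \<in> {Void, Mono, Dimer, LDimer}"
      using vmd_tiling_append_nonempty(1)[of "A @ [t]" B] assms(1) D(1) by auto
    then have "xs' \<in> cut_rests"
      using drop_word_cut_rests[of t "length xs"] D(2) False by simp
    then show ?thesis
      using D u v \<open>B \<noteq> []\<close> by (intro exI[of _ "A @ [t]"] exI[of _ B] exI[of _ xs']) auto
  qed
qed

lemma vmd_tiling_glue: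
  assumes "vmd_tiling D1" "content D1 = u @ v" "vmd_tiling D2" "content D2 = v @ z" "6 \<le> length v"
  shows "\<exists>D. vmd_tiling D \<and> content D = u @ v @ z"
proof (cases "u = []")
  case True
  then show ?thesis using assms(3,4) by auto
next
  case False
  then obtain A B s where cut: "D1 = A @ B" "A \<noteq> []" "B \<noteq> []"
    "content A = u @ s" "v = s @ content B" "s \<in> cut_rests"
    using vmd_tiling_cut assms(1,2,5) by blast
  have "body_tiling B"
    using vmd_tiling_append_nonempty(2) assms(1) cut(1-3) by blast
  then obtain E where "body_tiling E" "content E = content B @ z"
    using vmd_tiling_resync[OF assms(3) _ cut(6) _ refl] assms(4,5) cut(5) by auto
  then show ?thesis
    using vmd_tiling_append_nonempty(3)[of A B E] assms(1) cut by (intro exI[of _ "A @ E"]) auto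
qed

lemma ball_atLeastLessThan_int_shift:
  fixes b c :: int
  shows "(\<forall>i\<in>{b..<c}. P i) \<longleftrightarrow> (\<forall>j<nat (c - b). P (b + int j))"
proof
  assume shifted: "\<forall>j<nat (c - b). P (b + int j)"
  show "\<forall>i\<in>{b..<c}. P i"
  proof
    fix i
    assume "i \<in> {b..<c}"
    then have "nat (i - b) < nat (c - b)" "b + int (nat (i - b)) = i" by auto
    then show "P i" using shifted by metis
  qed
qed auto

lemma sigma_agree_iff:
  assumes "x \<le> b" "y \<le> b" "b \<le> c"
    and "c - x \<le> int (length (content D))" "c - y \<le> int (length (content E))"
  shows "(\<forall>i\<in>{b..<c}. sigma x D i = sigma y E i) \<longleftrightarrow>
    take (nat (c - b)) (drop (nat (b - x)) (content D)) =
    take (nat (c - b)) (drop (nat (b - y)) (content E))"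
proof -
  have "(\<forall>i\<in>{b..<c}. sigma x D i = sigma y E i) \<longleftrightarrow>
      (\<forall>j<nat (c - b). content D ! (nat (b - x) + j) = content E ! (nat (b - y) + j))"
  proof -
    have "nat (b + int j - z) = nat (b - z) + j" if "z \<le> b" for z j
      using that by simp
    then show ?thesis
      unfolding ball_atLeastLessThan_int_shift sigma_def using assms(1,2) by simp
  qed
  also have "\<dots> \<longleftrightarrow> take (nat (c - b)) (drop (nat (b - x)) (content D)) =
      take (nat (c - b)) (drop (nat (b - y)) (content E))"
  proof -
    have "nat (b - x) + nat (c - b) \<le> length (content D)" "nat (b - y) + nat (c - b) \<le> length (content E)"
      using assms by linarith+
    then show ?thesis by (auto simp: list_eq_iff_nth_eq)
  qed
  finally show ?thesis .
qed

lemma take_drop_overlap_iff: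
  assumes "p \<le> length w1" "drop p w1 = take (length w1 - p) w2"
  shows "take (length w1) w = w1 \<and> drop p w = w2 \<longleftrightarrow> w = take p w1 @ w2"
proof
  assume "take (length w1) w = w1 \<and> drop p w = w2"
  then show "w = take p w1 @ w2"
    using assms(1) by (metis append_take_drop_id min.absorb1 take_take)
next
  assume w: "w = take p w1 @ w2"
  have "take (length w1) w = take p w1 @ drop p w1"
    using assms w by (simp add: min_absorb1)
  then show "take (length w1) w = w1 \<and> drop p w = w2"
    using assms(1) w by simp
qed
lemma sigma_agree_on_both_iff:
  assumes "a \<le> b" "b \<le> c" "c \<le> d"
    and "int (length (content D1)) = c - a" "int (length (content D2)) = d - b"
    and overlap: "drop (nat (b - a)) (content D1) = take (nat (c - b)) (content D2)"
  shows "int (length (content D)) = d - a \<and>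
      (\<forall>i \<in> {a..<c}. sigma a D i = sigma a D1 i) \<and> (\<forall>i \<in> {b..<d}. sigma a D i = sigma b D2 i)
    \<longleftrightarrow> content D = take (nat (b - a)) (content D1) @ content D2"
proof (cases "int (length (content D)) = d - a")
  case True
  have "nat (c - a) = length (content D1)" "length (content D1) - nat (b - a) = nat (c - b)"
    using assms(1,2,4) by auto
  then have "(\<forall>i \<in> {a..<c}. sigma a D i = sigma a D1 i) \<and>
      (\<forall>i \<in> {b..<d}. sigma a D i = sigma b D2 i) \<longleftrightarrow>
      take (length (content D1)) (content D) = content D1 \<and> drop (nat (b - a)) (content D) = content D2"
    using assms(1-5) True sigma_agree_iff[of a a a c D D1] sigma_agree_iff[of a b b d D D2] by simp
  also have "\<dots> \<longleftrightarrow> content D = take (nat (b - a)) (content D1) @ content D2"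
    using assms(1,2,4) overlap \<open>length (content D1) - nat (b - a) = nat (c - b)\<close>
    by (intro take_drop_overlap_iff) simp_all
  finally show ?thesis using True by simp
next
  case False
  then show ?thesis using assms(1,2,4,5) by auto
qed

theorem lemma2p3:
  fixes a b c d :: int and D1 D2 :: "tile list"
  assumes "a \<le> b" and "b \<le> c" and "c \<le> d"
    and "c - b \<ge> 6"
    and "D1 \<in> VMD_tilings a c"
    and "D2 \<in> VMD_tilings b d"
    and "\<forall>i \<in> {b..<c}. sigma a D1 i = sigma b D2 i"
  shows "\<exists>!D. D \<in> VMD_tilings a d \<and>
              (\<forall>i \<in> {a..<c}. sigma a D i = sigma a D1 i) \<and>
              (\<forall>i \<in> {b..<d}. sigma a D i = sigma b D2 i)"
proof -
  let ?p = "nat (b - a)" and ?w1 = "content D1" and ?w2 = "content D2"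
  have D1: "vmd_tiling D1" "int (length ?w1) = c - a"
    and D2: "vmd_tiling D2" "int (length ?w2) = d - b"
    using assms(5,6) unfolding VMD_tilings_eq by auto
  have overlap: "drop ?p ?w1 = take (nat (c - b)) ?w2"
    using assms(1-3,7) D1(2) D2(2) sigma_agree_iff[of a b b c D1 D2] by simp
  then have "?w2 = drop ?p ?w1 @ drop (nat (c - b)) ?w2" "6 \<le> length (drop ?p ?w1)"
    using assms(1-4) D1(2) D2(2) by auto
  then obtain D where D: "vmd_tiling D" "content D = take ?p ?w1 @ ?w2"
    using vmd_tiling_glue[OF D1(1) append_take_drop_id[symmetric] D2(1)] by metis
  have agree_iff: "D' \<in> VMD_tilings a d \<and> (\<forall>i \<in> {a..<c}. sigma a D' i = sigma a D1 i) \<and>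
      (\<forall>i \<in> {b..<d}. sigma a D' i = sigma b D2 i) \<longleftrightarrow> vmd_tiling D' \<and> content D' = content D" for D'
    using sigma_agree_on_both_iff[OF assms(1-3) D1(2) D2(2) overlap, of D'] D(2)
    unfolding VMD_tilings_eq by auto
  show ?thesis
    unfolding agree_iff using D(1) inj_onD[OF vmd_tiling_content_inj] by auto
qed

end
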